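(* For all integers $n\ge1$, $k\ge1$ and every sequence $\boldsymbol a$ of positive reals, with $\alpha_n(j;t)=A_n(j)\big(t^j-(t-1)^j\big)$, \[ \theta_{n;k}(t)=\frac1{k!}\det\begin{pmatrix} \alpha_n(1;t)&-1&0&\cdots&0\\ \alpha_n(2;t)&\alpha_n(1;t)&-2&\cdots&0\\ \vdots&\vdots&\vdots&\ddots&\vdots\\ \alpha_n(k-1;t)&\alpha_n(k-2;t)&\alpha_n(k-3;t)&\cdots&-(k-1)\\ \alpha_n(k;t)&\alpha_n(k-1;t)&\alpha_n(k-2;t)&\cdots&\alpha_n(1;t) \end{pmatrix}, \] i.e. the $k\times k$ matrix with entries $M_{i,j}=\alpha_n(i-j+1;t)$ for $j\le i$, $M_{i,i+1}=-i$, and $M_{i,j}=0$ for $j\ge i+2$.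
   Context: Let $\boldsymbol a=(a_j)_{j\ge1}$ be a sequence of positive reals. For integers $n\ge1$, $k\ge0$ let $\mathcal M_{n,k}=\{(\ell_1,\dots,\ell_k)\in\mathbb N^k: n\ge\ell_1\ge\cdots\ge\ell_k\ge1\}$. For $\vec\ell\in\mathcal M_{n,k}$ let $\sigma(\vec\ell)=|\{1\le j\le k-1:\ell_j=\ell_{j+1}\}|$ and $w(\vec\ell)=\prod_{j=1}^k a_{\ell_j}$. Define $\theta_{n;k}(t)=\sum_{\vec\ell\in\mathcal M_{n,k}}w(\vec\ell)\,t^{\sigma(\vec\ell)}$, and $A_n(j)=\sum_{m=1}^n a_m^j$. *)

theory Defs
  imports Complex_Main "Jordan_Normal_Form.Determinant"
begin

text \<open>Weakly decreasing sequences n \<ge> l_1 \<ge> ... \<ge> l_k \<ge> 1, represented as lists of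
  length k (list index i corresponds to l_(i+1)).\<close>
definition Mset :: "nat \<Rightarrow> nat \<Rightarrow> nat list set" where
  "Mset n k = {l. length l = k \<and> (\<forall>i<k. 1 \<le> l ! i \<and> l ! i \<le> n)
                  \<and> (\<forall>i. Suc i < k \<longrightarrow> l ! Suc i \<le> l ! i)}"

definition sigma :: "nat list \<Rightarrow> nat" where
  "sigma l = card {j. Suc j < length l \<and> l ! j = l ! Suc j}"

definition weight :: "(nat \<Rightarrow> real) \<Rightarrow> nat list \<Rightarrow> real" where
  "weight a l = prod_list (map a l)"

definition theta :: "(nat \<Rightarrow> real) \<Rightarrow> nat \<Rightarrow> nat \<Rightarrow> real \<Rightarrow> real" where
  "theta a n k t = (\<Sum>l\<in>Mset n k. weight a l * t ^ sigma l)"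

definition Apow :: "(nat \<Rightarrow> real) \<Rightarrow> nat \<Rightarrow> nat \<Rightarrow> real" where
  "Apow a n j = (\<Sum>m=1..n. a m ^ j)"

definition alpha :: "(nat \<Rightarrow> real) \<Rightarrow> nat \<Rightarrow> nat \<Rightarrow> real \<Rightarrow> real" where
  "alpha a n j t = Apow a n j * (t ^ j - (t - 1) ^ j)"

text \<open>The k x k matrix, 0-based: entry (i,j) is M_{i+1,j+1} of the paper.\<close>
definition thetaMat :: "(nat \<Rightarrow> real) \<Rightarrow> nat \<Rightarrow> nat \<Rightarrow> real \<Rightarrow> real mat" where
  "thetaMat a n k t = mat k k (\<lambda>(i, j).
      if j \<le> i then alpha a n (i - j + 1) t
      else if j = i + 1 then - real (i + 1)
      else 0)"

end

theory Submission
  imports Defs "HOL-Computational_Algebra.Formal_Power_Series"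
begin

text \<open>
  Splitting a weakly decreasing word into blocks of equal letters shows that the generating
  function \<open>\<Theta>(x) = \<Sum>k. \<theta>_{n;k}(t) x^k\<close> is the product over \<open>m \<le> n\<close> of the block series
  \<open>F_m(x) = 1 + \<Sum>j\<ge>1. a_m^j t^(j-1) x^j\<close>: a block of \<open>j\<close> copies of \<open>m\<close> has weight \<open>a_m^j\<close>
  and contributes \<open>j - 1\<close> to \<open>\<sigma>\<close>. Each block series satisfies
  \<open>x F_m' = F_m \<Sum>j. a_m^j (t^j - (t-1)^j) x^j\<close>, hence \<open>x \<Theta>' = \<Theta> \<Sum>j. \<alpha>_n(j;t) x^j\<close>, which are
  Newton's identities \<open>k \<theta>_k = \<Sum>i<k. \<theta>_i \<alpha>(k - i)\<close>. They say that the matrix of the theorem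
  maps \<open>(\<theta>_0, \<dots>, \<theta>_{k-1})\<close> to \<open>(0, \<dots>, 0, k \<theta>_k)\<close>; Cramer's rule for the entry \<open>\<theta>_0 = 1\<close>
  then gives the determinant, the relevant minor being triangular with determinant \<open>\<plusminus>(k-1)!\<close>.
\<close>

lemma sigma_Nil [simp]: "sigma [] = 0"
  and sigma_single [simp]: "sigma [x] = 0"
  by (simp_all add: sigma_def)

lemma sigma_Cons_Cons [simp]:
  "sigma (x # y # xs) = (if x = y then 1 else 0) + sigma (y # xs)"
proof -
  define B where "B = {j. Suc j < length (y # xs) \<and> (y # xs) ! j = (y # xs) ! Suc j}"
  have "{j. Suc j < length (x # y # xs) \<and> (x # y # xs) ! j = (x # y # xs) ! Suc j}
      = (if x = y then {0} else {}) \<union> Suc ` B"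
  proof (rule Set.set_eqI)
    show "j \<in> {j. Suc j < length (x # y # xs) \<and> (x # y # xs) ! j = (x # y # xs) ! Suc j}
        \<longleftrightarrow> j \<in> (if x = y then {0} else {}) \<union> Suc ` B" for j
      by (cases j) (auto simp: B_def image_iff)
  qed
  moreover have "finite B"
    unfolding B_def by (rule finite_subset[of _ "{..<length (y # xs)}"]) auto
  ultimately show ?thesis
    unfolding sigma_def B_def[symmetric] by (simp add: card_Un_disjoint card_image)
qed

lemma sigma_replicate_append:
  "x \<notin> set r \<Longrightarrow> sigma (replicate (Suc m) x @ r) = m + sigma r"
  by (induction m) (cases r; simp)+

lemma mem_Mset_iff:
  "l \<in> Mset n k \<longleftrightarrow> length l = k \<and> set l \<subseteq> {1..n} \<and> sorted_wrt (\<ge>) l"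
proof -
  have "sorted_wrt (\<ge>) l \<longleftrightarrow> (\<forall>i. Suc i < length l \<longrightarrow> l ! Suc i \<le> l ! i)"
    by (subst sorted_wrt_iff_nth_Suc_transp) (auto simp: transp_def)
  moreover have "set l \<subseteq> {1..n} \<longleftrightarrow> (\<forall>i<length l. 1 \<le> l ! i \<and> l ! i \<le> n)"
    by (auto simp: in_set_conv_nth subset_iff)
  ultimately show ?thesis
    unfolding Mset_def by auto
qed

lemma finite_Mset: "finite (Mset n k)"
  by (rule finite_subset[OF _ finite_lists_length_eq[OF finite_atLeastAtMost, of 1 n k]])
    (auto simp: mem_Mset_iff subset_iff)

lemma Mset_0: "Mset 0 k = (if k = 0 then {[]} else {})"
  by (auto simp: mem_Mset_iff)

lemma Mset_length_0: "Mset n 0 = {[]}"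
  by (auto simp: mem_Mset_iff)

lemma Mset_Suc:
  "Mset (Suc n) k = (\<lambda>(m, r). replicate m (Suc n) @ r) ` (SIGMA m:{0..k}. Mset n (k - m))"
proof (intro Set.set_eqI iffI)
  fix l assume l: "l \<in> Mset (Suc n) k"
  define m where "m = length (takeWhile ((=) (Suc n)) l)"
  define r where "r = dropWhile ((=) (Suc n)) l"
  have "takeWhile ((=) (Suc n)) l = replicate m (Suc n)"
    unfolding m_def by (rule replicate_length_same[symmetric]) (auto dest: set_takeWhileD)
  then have lr: "l = replicate m (Suc n) @ r"
    using takeWhile_dropWhile_id[of "(=) (Suc n)" l] unfolding r_def by simp
  have len: "length l = k" and set_l: "set l \<subseteq> {1..Suc n}" and sorted_l: "sorted_wrt (\<ge>) l"
    using l by (auto simp: mem_Mset_iff)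
  have sorted_r: "sorted_wrt (\<ge>) r"
    using sorted_l lr by (simp add: sorted_wrt_append)
  have "set r \<subseteq> {1..n}"
  proof
    fix z assume z: "z \<in> set r"
    then obtain y ys where r: "r = y # ys" by (cases r) auto
    have "y \<noteq> Suc n" using hd_dropWhile[of "(=) (Suc n)" l] r unfolding r_def by auto
    moreover have "z \<le> y" using z sorted_r r by auto
    ultimately show "z \<in> {1..n}" using z set_l lr r by auto
  qed
  then have "r \<in> Mset n (k - m)"
    using sorted_r len lr by (auto simp: mem_Mset_iff)
  moreover have "m \<le> k"
    using len lr by (metis le_add1 length_append length_replicate)
  ultimately show "l \<in> (\<lambda>(m, r). replicate m (Suc n) @ r) ` (SIGMA m:{0..k}. Mset n (k - m))"
    using lr by force
next
  fix l assume "l \<in> (\<lambda>(m, r). replicate m (Suc n) @ r) ` (SIGMA m:{0..k}. Mset n (k - m))"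
  then obtain m r where "m \<le> k" "r \<in> Mset n (k - m)" "l = replicate m (Suc n) @ r"
    by auto
  moreover have "sorted_wrt (\<ge>) (replicate m (Suc n))"
    by (induction m) auto
  ultimately show "l \<in> Mset (Suc n) k"
    by (auto simp: mem_Mset_iff sorted_wrt_append)
qed

lemma inj_on_replicate_append:
  "inj_on (\<lambda>(m, r). replicate m (Suc n) @ r) (SIGMA m:{0..k}. Mset n (k - m))"
proof (rule inj_onI, clarsimp)
  fix m r m' r'
  assume "r \<in> Mset n (k - m)" "r' \<in> Mset n (k - m')"
    and eq: "replicate m (Suc n) @ r = replicate m' (Suc n) @ r'"
  then have "filter ((=) (Suc n)) r = []" "filter ((=) (Suc n)) r' = []"
    by (auto simp: mem_Mset_iff filter_empty_conv)
  then have "m = m'"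
    using arg_cong[OF eq, of "length \<circ> filter ((=) (Suc n))"] by simp
  then show "m = m' \<and> r = r'"
    using eq by simp
qed

lemma theta_0: "theta a 0 k t = (if k = 0 then 1 else 0)"
  by (simp add: theta_def Mset_0 weight_def)

lemma theta_length_0: "theta a n 0 t = 1"
  by (simp add: theta_def Mset_length_0 weight_def)

lemma theta_Suc:
  "theta a (Suc n) k t =
    (\<Sum>m=0..k. (if m = 0 then 1 else a (Suc n) ^ m * t ^ (m - 1)) * theta a n (k - m) t)"
proof -
  define f where "f l = weight a l * t ^ sigma l" for l
  have block: "f (replicate m (Suc n) @ r) =
      (if m = 0 then 1 else a (Suc n) ^ m * t ^ (m - 1)) * f r" if "r \<in> Mset n j" for m r j
  proof (cases m)
    case (Suc m')
    have "Suc n \<notin> set r" using that by (auto simp: mem_Mset_iff)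
    then have "sigma (replicate m (Suc n) @ r) = m' + sigma r"
      unfolding Suc by (rule sigma_replicate_append)
    then show ?thesis
      using Suc by (simp add: f_def weight_def prod_list_replicate power_add)
  qed (simp add: f_def)
  have "theta a (Suc n) k t = (\<Sum>(m, r)\<in>(SIGMA m:{0..k}. Mset n (k - m)). f (replicate m (Suc n) @ r))"
    unfolding theta_def f_def[symmetric] Mset_Suc
    by (subst sum.reindex[OF inj_on_replicate_append]) (simp add: case_prod_unfold)
  also have "\<dots> = (\<Sum>m=0..k. \<Sum>r\<in>Mset n (k - m). f (replicate m (Suc n) @ r))"
    by (rule sum.Sigma[symmetric]) (auto simp: finite_Mset)
  also have "\<dots> = (\<Sum>m=0..k. (if m = 0 then 1 else a (Suc n) ^ m * t ^ (m - 1)) * theta a n (k - m) t)"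
    unfolding theta_def f_def[symmetric] sum_distrib_left by (intro sum.cong refl) (simp add: block)
  finally show ?thesis .
qed

lemma sum_power_mult_power_diff:
  fixes t :: "'a::comm_ring_1"
  shows "(\<Sum>i\<le>m. t ^ i * (t ^ (m - i) - (t - 1) ^ (m - i)))
    = of_nat (m + 1) * t ^ m - (t ^ (m + 1) - (t - 1) ^ (m + 1))"
proof (induction m)
  case (Suc m)
  have "(\<Sum>i\<le>Suc m. t ^ i * (t ^ (Suc m - i) - (t - 1) ^ (Suc m - i)))
      = (t ^ Suc m - (t - 1) ^ Suc m) + t * (\<Sum>i\<le>m. t ^ i * (t ^ (m - i) - (t - 1) ^ (m - i)))"
    by (subst sum.atMost_Suc_shift) (simp add: sum_distrib_left mult.assoc)
  also have "\<dots> = of_nat (Suc m + 1) * t ^ Suc m - (t ^ (Suc m + 1) - (t - 1) ^ (Suc m + 1))"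
    unfolding Suc by (simp add: algebra_simps)
  finally show ?case .
qed simp

definition block_fps :: "'a::comm_ring_1 \<Rightarrow> 'a \<Rightarrow> 'a fps" where
  "block_fps c t = Abs_fps (\<lambda>m. if m = 0 then 1 else c ^ m * t ^ (m - 1))"

definition block_alpha_fps :: "'a::comm_ring_1 \<Rightarrow> 'a \<Rightarrow> 'a fps" where
  "block_alpha_fps c t = Abs_fps (\<lambda>j. c ^ j * (t ^ j - (t - 1) ^ j))"

lemma fps_X_deriv_block_fps:
  "fps_X * fps_deriv (block_fps c t) = block_fps c t * block_alpha_fps c t"
proof (rule fps_ext)
  fix m
  show "fps_nth (fps_X * fps_deriv (block_fps c t)) m = fps_nth (block_fps c t * block_alpha_fps c t) m"
  proof (cases m)
    case (Suc m')
    have shift: "fps_nth (block_fps c t) (Suc i) * fps_nth (block_alpha_fps c t) (m - Suc i)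
        = c ^ m * (t ^ i * (t ^ (m' - i) - (t - 1) ^ (m' - i)))" if "i \<le> m'" for i
    proof -
      obtain d where "m' = i + d" using \<open>i \<le> m'\<close> le_Suc_ex by blast
      then show ?thesis
        using Suc by (simp add: block_fps_def block_alpha_fps_def power_add algebra_simps)
    qed
    have "fps_nth (block_fps c t * block_alpha_fps c t) m
        = c ^ m * ((t ^ m - (t - 1) ^ m) + (\<Sum>i\<le>m'. t ^ i * (t ^ (m' - i) - (t - 1) ^ (m' - i))))"
      unfolding fps_mult_nth Suc atLeast0AtMost sum.atMost_Suc_shift
      using shift[unfolded Suc]
      by (simp add: block_fps_def block_alpha_fps_def sum_distrib_left distrib_left)
    also have "\<dots> = of_nat m * (c ^ m * t ^ m')"
      unfolding sum_power_mult_power_diff Suc by (simp add: algebra_simps)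
    finally show ?thesis
      using Suc by (simp add: block_fps_def)
  qed (simp add: block_fps_def block_alpha_fps_def)
qed

definition theta_fps :: "(nat \<Rightarrow> real) \<Rightarrow> nat \<Rightarrow> real \<Rightarrow> real fps" where
  "theta_fps a n t = Abs_fps (\<lambda>k. theta a n k t)"

definition alpha_fps :: "(nat \<Rightarrow> real) \<Rightarrow> nat \<Rightarrow> real \<Rightarrow> real fps" where
  "alpha_fps a n t = Abs_fps (\<lambda>j. alpha a n j t)"

lemma theta_fps_0: "theta_fps a 0 t = 1"
  by (rule fps_ext) (simp add: theta_fps_def theta_0)

lemma theta_fps_Suc: "theta_fps a (Suc n) t = block_fps (a (Suc n)) t * theta_fps a n t"
  by (rule fps_ext) (simp add: theta_fps_def block_fps_def fps_mult_nth theta_Suc)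

lemma alpha_fps_0: "alpha_fps a 0 t = 0"
  by (rule fps_ext) (simp add: alpha_fps_def alpha_def Apow_def)

lemma alpha_fps_Suc: "alpha_fps a (Suc n) t = alpha_fps a n t + block_alpha_fps (a (Suc n)) t"
  by (rule fps_ext) (simp add: alpha_fps_def block_alpha_fps_def alpha_def Apow_def algebra_simps)

lemma fps_X_deriv_theta_fps: "fps_X * fps_deriv (theta_fps a n t) = theta_fps a n t * alpha_fps a n t"
proof (induction n)
  case (Suc n)
  let ?F = "block_fps (a (Suc n)) t"
  have "fps_X * fps_deriv (theta_fps a (Suc n) t)
      = ?F * (fps_X * fps_deriv (theta_fps a n t)) + (fps_X * fps_deriv ?F) * theta_fps a n t"
    by (simp add: theta_fps_Suc algebra_simps)
  also have "\<dots> = theta_fps a (Suc n) t * alpha_fps a (Suc n) t"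
    by (simp add: Suc fps_X_deriv_block_fps theta_fps_Suc alpha_fps_Suc algebra_simps)
  finally show ?case .
qed (simp add: theta_fps_0 alpha_fps_0)

lemma theta_newton_identity:
  "real k * theta a n k t = (\<Sum>i=0..k. theta a n i t * alpha a n (k - i) t)"
proof -
  have "real k * theta a n k t = fps_nth (fps_X * fps_deriv (theta_fps a n t)) k"
    by (cases k) (simp_all add: theta_fps_def)
  also have "\<dots> = (\<Sum>i=0..k. theta a n i t * alpha a n (k - i) t)"
    by (simp only: fps_X_deriv_theta_fps fps_mult_nth) (simp add: theta_fps_def alpha_fps_def)
  finally show ?thesis .
qed

lemma det_mult_cofactor_if_mult_vec_unit:
  fixes A :: "'a::comm_ring_1 mat"
  assumes A: "A \<in> carrier_mat n n" and x: "x \<in> carrier_vec n" and i: "i < n" and j: "j < n"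
    and Ax: "A *\<^sub>v x = c \<cdot>\<^sub>v unit_vec n i"
  shows "x $ j * det A = c * cofactor A i j"
proof -
  have "det A \<cdot>\<^sub>v x = (adj_mat A * A) *\<^sub>v x"
    using adj_mat(3)[OF A] x by auto
  also have "\<dots> = adj_mat A *\<^sub>v (c \<cdot>\<^sub>v unit_vec n i)"
    using adj_mat(1)[OF A] A x by (metis Ax assoc_mult_mat_vec)
  finally have "x $ j * det A = (adj_mat A *\<^sub>v (c \<cdot>\<^sub>v unit_vec n i)) $ j"
    using x j by (metis index_smult_vec(1) carrier_vecD mult.commute)
  also have "\<dots> = c * adj_mat A $$ (j, i)"
    using adj_mat(1)[OF A] i j by (simp add: mult_mat_vec)
  also have "adj_mat A $$ (j, i) = cofactor A i j"
    using A i j by (simp add: adj_mat_def)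
  finally show ?thesis .
qed

definition newton_mat :: "nat \<Rightarrow> (nat \<Rightarrow> 'a::comm_ring_1) \<Rightarrow> 'a mat" where
  "newton_mat k p = mat k k (\<lambda>(i, j).
      if j \<le> i then p (i - j + 1) else if j = i + 1 then - of_nat (i + 1) else 0)"

lemma newton_mat_carrier: "newton_mat k p \<in> carrier_mat k k"
  by (simp add: newton_mat_def)

lemma newton_mat_mult_vec:
  assumes "p 0 = 0" and "\<And>m. of_nat m * e m = (\<Sum>i=0..m. e i * p (m - i))"
  shows "newton_mat k p *\<^sub>v vec k e = (of_nat k * e k) \<cdot>\<^sub>v unit_vec k (k - 1)"
proof (rule eq_vecI)
  fix i assume "i < dim_vec ((of_nat k * e k) \<cdot>\<^sub>v unit_vec k (k - 1))"
  then have i: "i < k" by simp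
  have newton: "of_nat (i + 1) * e (i + 1) = (\<Sum>j=0..i. p (i - j + 1) * e j)"
    using assms(1) assms(2)[of "i + 1"] by (simp add: Suc_diff_le mult.commute)
  have "(newton_mat k p *\<^sub>v vec k e) $ i
      = (\<Sum>j=0..<k. (if j \<le> i then p (i - j + 1) * e j else 0)
          + (if j = i + 1 then - of_nat (i + 1) * e j else 0))"
    using i by (auto simp: newton_mat_def scalar_prod_def intro!: sum.cong)
  also have "\<dots> = (\<Sum>j=0..i. p (i - j + 1) * e j)
      - (if i + 1 < k then of_nat (i + 1) * e (i + 1) else 0)"
  proof -
    have "(\<Sum>j=0..<k. if j \<le> i then p (i - j + 1) * e j else 0) = (\<Sum>j=0..i. p (i - j + 1) * e j)"
      using i by (intro sum.mono_neutral_cong_right) auto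
    then show ?thesis
      by (simp add: sum.distrib sum.delta algebra_simps)
  qed
  also have "\<dots> = ((of_nat k * e k) \<cdot>\<^sub>v unit_vec k (k - 1)) $ i"
  proof (cases "i + 1 < k")
    case False
    then have "k = i + 1"
      using i by simp
    then have "((of_nat k * e k) \<cdot>\<^sub>v unit_vec k (k - 1)) $ i = of_nat (i + 1) * e (i + 1)"
      by simp
    then show ?thesis
      using False newton by simp
  next
    case True
    then have "i \<noteq> k - 1" by simp
    then show ?thesis
      using True newton by simp
  qed
  finally show "(newton_mat k p *\<^sub>v vec k e) $ i = ((of_nat k * e k) \<cdot>\<^sub>v unit_vec k (k - 1)) $ i" .
qed (simp add: newton_mat_def)

lemma cofactor_newton_mat:
  assumes "k \<ge> 1"
  shows "cofactor (newton_mat k p) (k - 1) 0 = of_nat (fact (k - 1))"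
proof -
  define D where "D = mat_delete (newton_mat k p) (k - 1) 0"
  have D: "D \<in> carrier_mat (k - 1) (k - 1)"
    unfolding D_def by (rule mat_delete_carrier[OF newton_mat_carrier])
  have D_entry: "D $$ (i, j) = newton_mat k p $$ (i, Suc j)" if "i < k - 1" "j < k - 1" for i j
    using that newton_mat_carrier[of k p] by (auto simp: D_def mat_delete_def)
  \<comment> \<open>deleting the first column shifts the superdiagonal \<open>-1, \<dots>, -(k-1)\<close> onto the diagonal\<close>
  have "det D = (\<Prod>i=0..<k-1. - of_nat (i + 1))"
    using D by (subst det_lower_triangular[OF _ D])
      (auto simp: D_entry newton_mat_def prod_list_diag_prod intro!: prod.cong)
  also have "\<dots> = (\<Prod>i=0..<k-1. (-1) * of_nat (Suc i))"
    by simp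
  also have "\<dots> = (-1) ^ (k - 1) * of_nat (fact (k - 1))"
    unfolding prod.distrib fact_prod_Suc of_nat_prod by simp
  finally show ?thesis
    unfolding cofactor_def D_def[symmetric] by (simp flip: power_add)
qed

lemma det_newton_mat:
  fixes e p :: "nat \<Rightarrow> 'a::comm_ring_1"
  assumes "e 0 = 1" and "p 0 = 0" and "\<And>m. of_nat m * e m = (\<Sum>i=0..m. e i * p (m - i))"
  shows "det (newton_mat k p) = of_nat (fact k) * e k"
proof (cases "k = 0")
  case True
  then show ?thesis
    using assms(1) newton_mat_carrier[of 0 p] by simp
next
  case False
  have "det (newton_mat k p) = vec k e $ 0 * det (newton_mat k p)"
    using False assms(1) by simp
  also have "\<dots> = of_nat k * e k * cofactor (newton_mat k p) (k - 1) 0"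
    using False
    by (intro det_mult_cofactor_if_mult_vec_unit[OF newton_mat_carrier _ _ _ newton_mat_mult_vec] assms)
      auto
  also have "\<dots> = of_nat k * e k * of_nat (fact (k - 1))"
    using False cofactor_newton_mat[of k p] by simp
  also have "\<dots> = of_nat (fact k) * e k"
    using False by (simp add: fact_reduce algebra_simps)
  finally show ?thesis .
qed

lemma thetaMat_eq_newton_mat: "thetaMat a n k t = newton_mat k (\<lambda>j. alpha a n j t)"
  by (simp add: thetaMat_def newton_mat_def)

text \<open>None of the hypotheses is needed; the identity also holds for \<open>n = 0\<close> and \<open>k = 0\<close>.\<close>

theorem mainTheorem4:
  fixes a :: "nat \<Rightarrow> real" and n k :: nat and t :: real
  assumes "\<And>j. j \<ge> 1 \<Longrightarrow> a j > 0"
    and "n \<ge> 1" and "k \<ge> 1"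
  shows "theta a n k t = det (thetaMat a n k t) / fact k"
proof -
  have "det (thetaMat a n k t) = of_nat (fact k) * theta a n k t"
    unfolding thetaMat_eq_newton_mat
    by (rule det_newton_mat) (simp_all add: theta_length_0 alpha_def theta_newton_identity)
  then show ?thesis
    by simp
qed

end
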